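(* Let $V$ be a finite set with $|V| = n$, where $n$ is prime, and let $c: V \rightarrow V$ be a cyclic permutation of $V$ (a single $n$-cycle). Then the set of nonconstant colorings $\chi: V \rightarrow \mathbb{P}$ is the disjoint union $$\biguplus_{\pi\in \mathfrak{S}_V} A(\pi, \mathrm{Des}(\pi c \pi^{-1})).$$
   Context: $\mathbb{P} = \{1,2,\ldots\}$. $\mathfrak{S}_V$ denotes the set of bijections $\pi: V \rightarrow [n]$. For $\pi \in \mathfrak{S}_V$ and $S \subseteq [n-1]$, $A(\pi,S)$ is the set of maps $\chi: V \rightarrow \mathbb{P}$ such that $\chi(\pi^{-1}(1)) \le \chi(\pi^{-1}(2)) \le \cdots \le \chi(\pi^{-1}(n))$ and $\chi(\pi^{-1}(i)) < \chi(\pi^{-1}(i+1))$ whenever $i \in S$. For a permutation $\sigma$ of $[n]$, its descent set is $\mathrm{Des}(\sigma) = \{ i \in [n-1] : \sigma(i) > \sigma(i+1)\}$; here $\pi c \pi^{-1}$ is a permutation of $[n]$. *)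

theory Defs
  imports Main "HOL-Library.FuncSet" "HOL-Combinatorics.Permutations" "HOL-Computational_Algebra.Primes"
begin

definition is_full_cycle :: "('a \<Rightarrow> 'a) \<Rightarrow> 'a set \<Rightarrow> bool" where
  "is_full_cycle c V \<longleftrightarrow> c permutes V \<and> (\<forall>x\<in>V. \<forall>y\<in>V. \<exists>k. (c ^^ k) x = y)"

definition bijs_to :: "'a set \<Rightarrow> ('a \<Rightarrow> nat) set" where
  "bijs_to V = {\<pi>. \<pi> \<in> V \<rightarrow>\<^sub>E {1..card V} \<and> bij_betw \<pi> V {1..card V}}"

definition conj_perm :: "'a set \<Rightarrow> ('a \<Rightarrow> nat) \<Rightarrow> ('a \<Rightarrow> 'a) \<Rightarrow> nat \<Rightarrow> nat" where
  "conj_perm V \<pi> c i = \<pi> (c (inv_into V \<pi> i))"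

definition Des :: "nat \<Rightarrow> (nat \<Rightarrow> nat) \<Rightarrow> nat set" where
  "Des n \<sigma> = {i \<in> {1..n-1}. \<sigma> i > \<sigma> (i+1)}"

definition colorings :: "'a set \<Rightarrow> ('a \<Rightarrow> nat) set" where
  "colorings V = V \<rightarrow>\<^sub>E {1..}"

definition A_set :: "'a set \<Rightarrow> ('a \<Rightarrow> nat) \<Rightarrow> nat set \<Rightarrow> ('a \<Rightarrow> nat) set" where
  "A_set V \<pi> S = {\<chi> \<in> colorings V.
     \<forall>i\<in>{1..card V - 1}.
       \<chi> (inv_into V \<pi> i) \<le> \<chi> (inv_into V \<pi> (i+1)) \<and>
       (i \<in> S \<longrightarrow> \<chi> (inv_into V \<pi> i) < \<chi> (inv_into V \<pi> (i+1)))}"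

end

(*
  The condition \<chi> \<in> A(\<pi>, Des(\<pi> c \<pi>\<^sup>-\<^sup>1)) says exactly that \<pi> lists V in increasing
  lexicographic order of the pairs (\<chi> u, \<pi> (c u)).  Unwinding this along the cycle, \<pi> must list V
  in lexicographic order of the words \<chi>(u) \<chi>(c u) ... \<chi>(c\<^sup>n\<^sup>-\<^sup>1 u); conversely that order
  satisfies the condition, since the word of c u is the rotation of the word of u.  For nonconstant \<chi>
  these words are pairwise distinct: equal words at u and w = c\<^sup>d u would give \<chi> \<circ> c\<^sup>k the periods
  d and n, which are coprime as n is prime, forcing \<chi> to be constant.  Hence exactly one \<pi> works.
  For constant \<chi> the condition makes \<pi> c \<pi>\<^sup>-\<^sup>1 increasing, so c fixes the first element of V,
  impossible for a cycle of length n \<ge> 2.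
*)

theory Submission
  imports Defs "HOL-Library.List_Lexorder" "HOL-Library.Product_Lexorder" "HOL-Combinatorics.Orbits"
begin

lemma orbit_eq_if_full_cycle:
  assumes "finite V" and "is_full_cycle c V" and "x \<in> V"
  shows "orbit c x = V"
proof -
  have perm: "c permutes V" and reach: "\<forall>y\<in>V. \<exists>k. (c ^^ k) x = y"
    using assms by (auto simp: is_full_cycle_def)
  have "orbit c x = {(c ^^ k) x | k. True}"
    using perm assms(1) by (intro orbit_altdef_permutation) (auto simp: permutation_permutes)
  then show ?thesis
    using reach permutes_in_funpow_image[OF perm assms(3)] by auto
qed

lemma funpow_card_if_full_cycle:
  assumes "finite V" and "is_full_cycle c V" and "x \<in> V"
  shows "(c ^^ card V) x = x"
proof -
  have orbit: "orbit c x = V" using orbit_eq_if_full_cycle[OF assms] .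
  then have x: "x \<in> orbit c x" using assms(3) by simp
  have "card V = funpow_dist1 c x x"
    using card_image[OF inj_on_funpow_dist1[OF x]] orbit_conv_funpow_dist1[OF x] orbit by simp
  then show ?thesis using funpow_dist1_prop[OF x] by simp
qed

lemma permutes_fixes_min_if_order_preserving:
  fixes \<pi> :: "'a \<Rightarrow> 'b::linorder"
  assumes perm: "c permutes V" and inj: "inj_on \<pi> V"
    and mono: "\<And>u w. u \<in> V \<Longrightarrow> w \<in> V \<Longrightarrow> \<pi> u < \<pi> w \<Longrightarrow> \<pi> (c u) < \<pi> (c w)"
    and u: "u \<in> V" and min: "\<And>w. w \<in> V \<Longrightarrow> \<pi> u \<le> \<pi> w"
  shows "c u = u"
proof -
  obtain v where v: "v \<in> V" "c v = u"
    using u permutes_image[OF perm] by (metis imageE)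
  show ?thesis
  proof (cases "v = u")
    case False
    then have "\<pi> u < \<pi> v" using min v(1) inj u by (metis inj_on_eq_iff order_le_neq_trans)
    then have "\<pi> (c u) < \<pi> u" using mono u v by metis
    moreover have "c u \<in> V" using perm u by (simp add: permutes_in_image)
    ultimately show ?thesis using min by (meson not_le)
  qed (use v in simp)
qed

lemma periodic_add_mult:
  fixes f :: "nat \<Rightarrow> 'b"
  assumes "\<And>k. f (k + p) = f k"
  shows "f (k + p * m) = f k"
proof (induction m)
  case (Suc m)
  have "f (k + p * Suc m) = f ((k + p * m) + p)" by (simp add: algebra_simps)
  then show ?case using assms Suc.IH by simp
qed simp

lemma periodic_coprime_const:
  fixes f :: "nat \<Rightarrow> 'b"
  assumes p: "\<And>k. f (k + p) = f k" and q: "\<And>k. f (k + q) = f k"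
    and "coprime p q" and "p \<noteq> 0"
  shows "f k = f 0"
proof -
  obtain a b where ab: "p * a = q * b + 1"
    using bezout_nat[OF \<open>p \<noteq> 0\<close>, of q] \<open>coprime p q\<close> by (auto simp: coprime_iff_gcd_eq_1)
  have step: "f (Suc k) = f k" for k
  proof -
    have "f (Suc k) = f (Suc k + q * b)" by (rule periodic_add_mult[where f = f, OF q, symmetric])
    also have "Suc k + q * b = k + p * a" using ab by simp
    also have "f (k + p * a) = f k" by (rule periodic_add_mult[where f = f, OF p])
    finally show ?thesis .
  qed
  show ?thesis by (induction k) (simp_all add: step)
qed

definition rank_by :: "'a set \<Rightarrow> ('a \<Rightarrow> 'b::linorder) \<Rightarrow> 'a \<Rightarrow> nat" where
  "rank_by V f u = Suc (card {w \<in> V. f w < f u})"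

lemma rank_by_less_iff:
  assumes "finite V" and "u \<in> V" and "w \<in> V"
  shows "rank_by V f u < rank_by V f w \<longleftrightarrow> f u < f w"
proof
  assume "f u < f w"
  then have "{v \<in> V. f v < f u} \<subset> {v \<in> V. f v < f w}" using \<open>u \<in> V\<close> by auto
  then show "rank_by V f u < rank_by V f w"
    using \<open>finite V\<close> by (simp add: rank_by_def psubset_card_mono)
next
  assume "rank_by V f u < rank_by V f w"
  moreover have "rank_by V f w \<le> rank_by V f u" if "f w \<le> f u"
    using that \<open>finite V\<close> by (auto simp: rank_by_def intro!: card_mono)
  ultimately show "f u < f w" by (meson linorder_not_le)
qed

lemma bij_betw_rank_by:
  assumes fin: "finite V" and inj: "inj_on f V"
  shows "bij_betw (rank_by V f) V {1..card V}"
proof -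
  have inj_rank: "inj_on (rank_by V f) V"
  proof (rule inj_onI)
    fix u w assume u: "u \<in> V" and w: "w \<in> V" and "rank_by V f u = rank_by V f w"
    then have "\<not> f u < f w" and "\<not> f w < f u"
      using rank_by_less_iff[OF fin] by (metis less_irrefl)+
    then show "u = w" using inj u w by (auto dest: inj_onD)
  qed
  have "rank_by V f u \<le> card V" if "u \<in> V" for u
  proof -
    have "card {w \<in> V. f w < f u} \<le> card (V - {u})"
      using fin by (intro card_mono) auto
    also have "\<dots> = card V - 1" using fin that by (simp add: card_Diff_singleton)
    finally have "card {w \<in> V. f w < f u} \<le> card V - 1" .
    moreover have "0 < card V" using fin that card_gt_0_iff by blast
    ultimately show ?thesis unfolding rank_by_def by linarith
  qed
  then have "rank_by V f ` V \<subseteq> {1..card V}" by (auto simp: rank_by_def)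
  moreover have "card (rank_by V f ` V) = card {1..card V}"
    using card_image[OF inj_rank] by simp
  ultimately show ?thesis
    using inj_rank by (simp add: bij_betw_def card_subset_eq)
qed

lemma rank_by_bijs_to:
  assumes pi: "\<pi> \<in> bijs_to V" and u: "u \<in> V"
  shows "rank_by V \<pi> u = \<pi> u"
proof -
  have bij: "bij_betw \<pi> V {1..card V}" using pi by (simp add: bijs_to_def)
  have pu: "\<pi> u \<in> {1..card V}" using bij u by (rule bij_betw_apply)
  have "\<pi> ` {w \<in> V. \<pi> w < \<pi> u} = {1..<\<pi> u}"
  proof
    show "\<pi> ` {w \<in> V. \<pi> w < \<pi> u} \<subseteq> {1..<\<pi> u}"
      using bij by (auto dest: bij_betw_apply)
    show "{1..<\<pi> u} \<subseteq> \<pi> ` {w \<in> V. \<pi> w < \<pi> u}"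
    proof
      fix i assume i: "i \<in> {1..<\<pi> u}"
      then have "i \<in> \<pi> ` V" using pu bij by (auto simp: bij_betw_def)
      then show "i \<in> \<pi> ` {w \<in> V. \<pi> w < \<pi> u}" using i by auto
    qed
  qed
  moreover have "inj_on \<pi> {w \<in> V. \<pi> w < \<pi> u}"
    using bij by (auto simp: bij_betw_def intro: inj_on_subset)
  ultimately have "card {w \<in> V. \<pi> w < \<pi> u} = \<pi> u - 1"
    by (metis card_image card_atLeastLessThan)
  then show ?thesis using pu by (simp add: rank_by_def)
qed

definition orbit_word :: "('a \<Rightarrow> 'b) \<Rightarrow> ('a \<Rightarrow> 'a) \<Rightarrow> nat \<Rightarrow> 'a \<Rightarrow> 'b list" where
  "orbit_word \<chi> c m u = map (\<lambda>k. \<chi> ((c ^^ k) u)) [0..<m]"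

lemma orbit_word_Suc: "orbit_word \<chi> c (Suc m) u = \<chi> u # orbit_word \<chi> c m (c u)"
  unfolding orbit_word_def map_upt_Suc by (simp add: funpow_swap1)

lemma orbit_word_Suc_snoc: "orbit_word \<chi> c (Suc m) u = orbit_word \<chi> c m u @ [\<chi> ((c ^^ m) u)]"
  by (simp add: orbit_word_def)

lemma length_orbit_word [simp]: "length (orbit_word \<chi> c m u) = m"
  by (simp add: orbit_word_def)

lemma nth_orbit_word [simp]: "k < m \<Longrightarrow> orbit_word \<chi> c m u ! k = \<chi> ((c ^^ k) u)"
  by (simp add: orbit_word_def)

lemma inj_on_orbit_word:
  assumes fin: "finite V" and cyc: "is_full_cycle c V" and prime: "prime (card V)"
    and "x \<in> V" and "y \<in> V" and "\<chi> x \<noteq> \<chi> y"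
  shows "inj_on (orbit_word \<chi> c (card V)) V"
proof (rule inj_onI, rule ccontr)
  fix u w
  assume u: "u \<in> V" and w: "w \<in> V" and "u \<noteq> w"
    and same: "orbit_word \<chi> c (card V) u = orbit_word \<chi> c (card V) w"
  define n where "n = card V"
  have "n \<noteq> 0" using prime by (simp add: n_def prime_gt_0_nat)
  have mod_n: "(c ^^ (k mod n)) z = (c ^^ k) z" if "z \<in> V" for z k
    using funpow_mod_eq[OF funpow_card_if_full_cycle[OF fin cyc that]] by (simp add: n_def)
  define f where "f k = \<chi> ((c ^^ k) u)" for k
  have f_n: "f (k + n) = f k" for k
    using mod_n[OF u, of "k + n"] mod_n[OF u, of k] by (simp add: f_def)
  have same_all: "\<chi> ((c ^^ k) u) = \<chi> ((c ^^ k) w)" for k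
    using nth_orbit_word[of "k mod n" n \<chi> c] same \<open>n \<noteq> 0\<close> mod_n[OF u] mod_n[OF w]
    by (metis n_def mod_less_divisor neq0_conv)
  obtain j where j: "(c ^^ j) u = w" using cyc u w by (auto simp: is_full_cycle_def)
  define d where "d = j mod n"
  have d: "(c ^^ d) u = w" using mod_n[OF u, of j] j by (simp add: d_def)
  have f_d: "f (k + d) = f k" for k
    using same_all[of k] d by (simp add: f_def funpow_add)
  have "d \<noteq> 0" using d \<open>u \<noteq> w\<close> by (metis funpow_0 id_apply)
  moreover have "d < n" using \<open>n \<noteq> 0\<close> by (simp add: d_def)
  ultimately have "coprime d n"
    using prime by (intro prime_imp_coprime[THEN coprime_commute[THEN iffD1]]) (auto simp: n_def dest: dvd_imp_le)
  then have const: "f k = f 0" for k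
    using periodic_coprime_const[OF f_d f_n _ \<open>d \<noteq> 0\<close>] by blast
  have "\<chi> z = \<chi> u" if z: "z \<in> V" for z
  proof -
    obtain k where "(c ^^ k) u = z" using cyc u z by (auto simp: is_full_cycle_def)
    then show ?thesis using const[of k] by (simp add: f_def)
  qed
  then show False using assms(4-6) by metis
qed

definition lex_sorted_by_succ ::
    "'a set \<Rightarrow> ('a \<Rightarrow> 'a) \<Rightarrow> ('a \<Rightarrow> 'b::linorder) \<Rightarrow> ('a \<Rightarrow> 'c::linorder) \<Rightarrow> bool" where
  "lex_sorted_by_succ V c \<chi> \<pi> \<longleftrightarrow>
     (\<forall>u\<in>V. \<forall>w\<in>V. \<pi> u < \<pi> w \<longrightarrow> (\<chi> u, \<pi> (c u)) < (\<chi> w, \<pi> (c w)))"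

lemma A_set_Des_conj_perm_iff:
  assumes pi: "\<pi> \<in> bijs_to V" and perm: "c permutes V"
  shows "\<chi> \<in> A_set V \<pi> (Des (card V) (conj_perm V \<pi> c)) \<longleftrightarrow>
           \<chi> \<in> colorings V \<and> lex_sorted_by_succ V c \<chi> \<pi>"
proof -
  define n where "n = card V"
  define r where "r = inv_into V \<pi>"
  define key where "key i = (\<chi> (r i), \<pi> (c (r i)))" for i
  have bij: "bij_betw \<pi> V {1..n}" using pi by (simp add: bijs_to_def n_def)
  have r: "r i \<in> V" "\<pi> (r i) = i" if "i \<in> {1..n}" for i
    using that bij bij_betw_inv_into_right[OF bij] inv_into_into[of i \<pi> V]
    by (auto simp: r_def bij_betw_def)
  have r_pi: "r (\<pi> u) = u" if "u \<in> V" for u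
    using bij_betw_inv_into_left[OF bij that] by (simp add: r_def)
  have step_iff:
    "(\<chi> (r i) \<le> \<chi> (r (i + 1)) \<and> (i \<in> Des n (conj_perm V \<pi> c) \<longrightarrow> \<chi> (r i) < \<chi> (r (i + 1))))
       \<longleftrightarrow> key i < key (i + 1)" if i: "i \<in> {1..n - 1}" for i
  proof -
    have "i \<in> {1..n}" and "i + 1 \<in> {1..n}" using i by auto
    then have ri: "r i \<in> V" "r (i + 1) \<in> V" "\<pi> (r i) \<noteq> \<pi> (r (i + 1))"
      using r by simp_all
    then have "r i \<noteq> r (i + 1)" by auto
    moreover have "inj_on \<pi> V" using bij by (simp add: bij_betw_def)
    ultimately have "\<pi> (c (r i)) \<noteq> \<pi> (c (r (i + 1)))"
      using ri perm by (simp add: inj_on_eq_iff permutes_in_image permutes_inj_on)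
    moreover have "i \<in> Des n (conj_perm V \<pi> c) \<longleftrightarrow> \<pi> (c (r (i + 1))) < \<pi> (c (r i))"
      using i by (simp add: Des_def conj_perm_def r_def)
    ultimately show ?thesis by (auto simp: key_def)
  qed
  have "(\<forall>i\<in>{1..n - 1}. key i < key (i + 1)) \<longleftrightarrow> lex_sorted_by_succ V c \<chi> \<pi>"
  proof
    assume incr: "\<forall>i\<in>{1..n - 1}. key i < key (i + 1)"
    show "lex_sorted_by_succ V c \<chi> \<pi>"
      unfolding lex_sorted_by_succ_def
    proof (intro ballI impI)
      fix u w assume "u \<in> V" "w \<in> V" "\<pi> u < \<pi> w"
      moreover have "\<pi> u \<in> {1..n}" "\<pi> w \<in> {1..n}"
        using bij \<open>u \<in> V\<close> \<open>w \<in> V\<close> by (auto simp: bij_betw_def)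
      ultimately have "\<pi> u < \<pi> w" and "{\<pi> u..<\<pi> w} \<subseteq> {1..n - 1}" by auto
      then have "key (\<pi> u) < key (\<pi> w)"
        using lift_Suc_mono_less_ivl[of "{1..n - 1}" key] incr by simp
      then show "(\<chi> u, \<pi> (c u)) < (\<chi> w, \<pi> (c w))"
        using r_pi \<open>u \<in> V\<close> \<open>w \<in> V\<close> by (simp add: key_def)
    qed
  next
    assume sorted: "lex_sorted_by_succ V c \<chi> \<pi>"
    show "\<forall>i\<in>{1..n - 1}. key i < key (i + 1)"
    proof
      fix i assume "i \<in> {1..n - 1}"
      then have "i \<in> {1..n}" and "i + 1 \<in> {1..n}" by auto
      then show "key i < key (i + 1)"
        using sorted r unfolding lex_sorted_by_succ_def key_def by auto
    qed
  qed
  moreover have "(\<forall>i\<in>{1..n - 1}. \<chi> (r i) \<le> \<chi> (r (i + 1)) \<and>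
                   (i \<in> Des n (conj_perm V \<pi> c) \<longrightarrow> \<chi> (r i) < \<chi> (r (i + 1))))
                 \<longleftrightarrow> (\<forall>i\<in>{1..n - 1}. key i < key (i + 1))"
    using step_iff by (rule ball_cong[OF refl])
  ultimately show ?thesis
    unfolding A_set_def n_def[symmetric] r_def[symmetric] by blast
qed

lemma lex_sorted_by_succ_less_imp_less:
  assumes "lex_sorted_by_succ V c \<chi> \<pi>" and "inj_on \<pi> V" and "u \<in> V" and "w \<in> V"
    and "(\<chi> u, \<pi> (c u)) < (\<chi> w, \<pi> (c w))"
  shows "\<pi> u < \<pi> w"
proof (rule ccontr)
  assume "\<not> \<pi> u < \<pi> w"
  moreover have "u \<noteq> w" using assms(5) by auto
  then have "\<pi> u \<noteq> \<pi> w" using assms(2-4) by (auto simp: inj_on_eq_iff)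
  ultimately have "\<pi> w < \<pi> u" by simp
  then have "(\<chi> w, \<pi> (c w)) < (\<chi> u, \<pi> (c u))"
    using assms(1,3,4) by (auto simp: lex_sorted_by_succ_def)
  then show False using assms(5) less_asym by blast
qed

lemma lex_sorted_by_succ_orbit_word_less:
  assumes sorted: "lex_sorted_by_succ V c \<chi> \<pi>" and inj: "inj_on \<pi> V" and perm: "c permutes V"
  shows "u \<in> V \<Longrightarrow> w \<in> V \<Longrightarrow> orbit_word \<chi> c m u < orbit_word \<chi> c m w \<Longrightarrow> \<pi> u < \<pi> w"
proof (induction m arbitrary: u w)
  case 0
  then show ?case by (simp add: orbit_word_def)
next
  case (Suc m)
  have "c u \<in> V" "c w \<in> V" using Suc.prems perm by (auto simp: permutes_in_image)
  then have "(\<chi> u, \<pi> (c u)) < (\<chi> w, \<pi> (c w))"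
    using Suc by (auto simp: orbit_word_Suc)
  then show ?case using lex_sorted_by_succ_less_imp_less[OF sorted inj Suc.prems(1,2)] by blast
qed

lemma lex_sorted_by_succ_less_iff_orbit_word:
  assumes "lex_sorted_by_succ V c \<chi> \<pi>" and "inj_on \<pi> V" and "c permutes V"
    and inj_word: "inj_on (orbit_word \<chi> c m) V" and u: "u \<in> V" and w: "w \<in> V"
  shows "\<pi> u < \<pi> w \<longleftrightarrow> orbit_word \<chi> c m u < orbit_word \<chi> c m w"
proof
  assume "\<pi> u < \<pi> w"
  then have "orbit_word \<chi> c m u \<noteq> orbit_word \<chi> c m w" using inj_word u w by (auto dest: inj_onD)
  moreover have "\<not> orbit_word \<chi> c m w < orbit_word \<chi> c m u"
  proof
    assume "orbit_word \<chi> c m w < orbit_word \<chi> c m u"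
    then have "\<pi> w < \<pi> u" by (rule lex_sorted_by_succ_orbit_word_less[OF assms(1-3) w u])
    with \<open>\<pi> u < \<pi> w\<close> show False by simp
  qed
  ultimately show "orbit_word \<chi> c m u < orbit_word \<chi> c m w" by auto
qed (rule lex_sorted_by_succ_orbit_word_less[OF assms(1-3) u w])

lemma lex_sorted_by_succ_rank_by_orbit_word:
  assumes fin: "finite V" and cyc: "is_full_cycle c V"
  shows "lex_sorted_by_succ V c \<chi> (restrict (rank_by V (orbit_word \<chi> c (card V))) V)"
proof -
  define n where "n = card V"
  define \<rho> where "\<rho> = restrict (rank_by V (orbit_word \<chi> c n)) V"
  have perm: "c permutes V" using cyc by (simp add: is_full_cycle_def)
  have \<rho>_less_iff: "\<rho> u < \<rho> w \<longleftrightarrow> orbit_word \<chi> c n u < orbit_word \<chi> c n w"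
    if "u \<in> V" "w \<in> V" for u w
    using rank_by_less_iff[OF fin that] that by (simp add: \<rho>_def)
  show ?thesis
    unfolding lex_sorted_by_succ_def n_def[symmetric] \<rho>_def[symmetric]
  proof (intro ballI impI)
    fix u w assume u: "u \<in> V" and w: "w \<in> V" and "\<rho> u < \<rho> w"
    then have less: "orbit_word \<chi> c n u < orbit_word \<chi> c n w" using \<rho>_less_iff by blast
    obtain m where n: "n = Suc m" using u fin by (cases n) (auto simp: n_def)
    have rotate: "orbit_word \<chi> c n (c z) = orbit_word \<chi> c m (c z) @ [\<chi> z]" if "z \<in> V" for z
    proof -
      have "(c ^^ m) (c z) = (c ^^ n) z" by (simp add: n funpow_swap1)
      also have "\<dots> = z" using funpow_card_if_full_cycle[OF fin cyc that] by (simp add: n_def)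
      finally show ?thesis by (simp add: n orbit_word_Suc_snoc)
    qed
    consider "\<chi> u < \<chi> w"
      | "\<chi> u = \<chi> w" and "orbit_word \<chi> c m (c u) < orbit_word \<chi> c m (c w)"
      using less by (auto simp: n orbit_word_Suc)
    then show "(\<chi> u, \<rho> (c u)) < (\<chi> w, \<rho> (c w))"
    proof cases
      case 2
      then have "orbit_word \<chi> c n (c u) < orbit_word \<chi> c n (c w)"
        using rotate[OF u] rotate[OF w] lexord_sufI[of _ _ _ "[\<chi> u]" "[\<chi> w]"]
        by (simp add: list_less_def)
      then have "\<rho> (c u) < \<rho> (c w)"
        using \<rho>_less_iff u w perm by (simp add: permutes_in_image)
      with 2 show ?thesis by simp
    qed simp
  qed
qed

lemma restrict_rank_by_orbit_word_in_bijs_to: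
  assumes "finite V" and "is_full_cycle c V" and "prime (card V)"
    and "x \<in> V" and "y \<in> V" and "\<chi> x \<noteq> \<chi> y"
  shows "restrict (rank_by V (orbit_word \<chi> c (card V))) V \<in> bijs_to V"
  using bij_betw_rank_by[OF assms(1) inj_on_orbit_word[OF assms]]
  by (auto simp: bijs_to_def bij_betw_def)

lemma bijs_to_eq_rank_by_orbit_word:
  assumes fin: "finite V" and cyc: "is_full_cycle c V" and prime: "prime (card V)"
    and "x \<in> V" and "y \<in> V" and "\<chi> x \<noteq> \<chi> y"
    and pi: "\<pi> \<in> bijs_to V" and sorted: "lex_sorted_by_succ V c \<chi> \<pi>"
  shows "\<pi> = restrict (rank_by V (orbit_word \<chi> c (card V))) V"
proof
  fix u
  show "\<pi> u = restrict (rank_by V (orbit_word \<chi> c (card V))) V u"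
  proof (cases "u \<in> V")
    case True
    have "inj_on \<pi> V" using pi by (simp add: bijs_to_def bij_betw_def)
    moreover have "c permutes V" using cyc by (simp add: is_full_cycle_def)
    ultimately have "\<pi> w < \<pi> u \<longleftrightarrow> orbit_word \<chi> c (card V) w < orbit_word \<chi> c (card V) u"
      if "w \<in> V" for w
      using lex_sorted_by_succ_less_iff_orbit_word[OF sorted _ _ inj_on_orbit_word[OF assms(1-6)] that True]
      by blast
    then have "rank_by V \<pi> u = rank_by V (orbit_word \<chi> c (card V)) u"
      unfolding rank_by_def by (metis (lifting))
    then show ?thesis using rank_by_bijs_to[OF pi True] True by simp
  next
    case False
    then show ?thesis using pi by (auto simp: bijs_to_def PiE_def extensional_def)
  qed
qed

lemma lex_sorted_by_succ_nonconstant: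
  assumes fin: "finite V" and cyc: "is_full_cycle c V" and two: "2 \<le> card V"
    and pi: "\<pi> \<in> bijs_to V" and sorted: "lex_sorted_by_succ V c \<chi> \<pi>"
  shows "\<exists>x\<in>V. \<exists>y\<in>V. \<chi> x \<noteq> \<chi> y"
proof (rule ccontr)
  assume const: "\<not> ?thesis"
  have mono: "\<pi> (c u) < \<pi> (c w)" if "u \<in> V" "w \<in> V" "\<pi> u < \<pi> w" for u w
  proof -
    have "(\<chi> u, \<pi> (c u)) < (\<chi> w, \<pi> (c w))"
      using sorted that unfolding lex_sorted_by_succ_def by blast
    moreover have "\<chi> u = \<chi> w" using const that(1,2) by blast
    ultimately show ?thesis by simp
  qed
  have bij: "bij_betw \<pi> V {1..card V}" using pi by (simp add: bijs_to_def)
  define u where "u = inv_into V \<pi> 1"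
  have "1 \<in> \<pi> ` V" using bij_betw_imp_surj_on[OF bij] two by simp
  then have u: "u \<in> V" "\<pi> u = 1" by (simp_all add: u_def inv_into_into f_inv_into_f)
  have "c u = u"
  proof (rule permutes_fixes_min_if_order_preserving[where \<pi> = \<pi>])
    show "c permutes V" using cyc by (simp add: is_full_cycle_def)
    show "inj_on \<pi> V" using bij by (simp add: bij_betw_def)
    show "\<pi> u \<le> \<pi> w" if "w \<in> V" for w
      using bij_betw_apply[OF bij that] u by simp
  qed (use mono u in auto)
  then have "orbit c u = {u}" by (simp add: orbit_eq_singleton_iff)
  then have "V = {u}" using orbit_eq_if_full_cycle[OF fin cyc u(1)] by simp
  then show False using two by simp
qed

lemma A_set_rank_by_orbit_word:
  assumes fin: "finite V" and cyc: "is_full_cycle c V" and prime: "prime (card V)"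
    and "\<chi> \<in> colorings V" and "x \<in> V" and "y \<in> V" and "\<chi> x \<noteq> \<chi> y"
  defines "\<rho> \<equiv> restrict (rank_by V (orbit_word \<chi> c (card V))) V"
  shows "\<rho> \<in> bijs_to V" and "\<chi> \<in> A_set V \<rho> (Des (card V) (conj_perm V \<rho> c))"
proof -
  show \<rho>: "\<rho> \<in> bijs_to V"
    unfolding \<rho>_def by (rule restrict_rank_by_orbit_word_in_bijs_to[OF fin cyc prime assms(5-7)])
  have "c permutes V" using cyc by (simp add: is_full_cycle_def)
  then show "\<chi> \<in> A_set V \<rho> (Des (card V) (conj_perm V \<rho> c))"
    using A_set_Des_conj_perm_iff[OF \<rho>] lex_sorted_by_succ_rank_by_orbit_word[OF fin cyc] assms(4)
    by (simp add: \<rho>_def)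
qed

lemma A_set_nonconstant:
  assumes fin: "finite V" and cyc: "is_full_cycle c V" and two: "2 \<le> card V"
    and pi: "\<pi> \<in> bijs_to V" and "\<chi> \<in> A_set V \<pi> (Des (card V) (conj_perm V \<pi> c))"
  shows "\<exists>x\<in>V. \<exists>y\<in>V. \<chi> x \<noteq> \<chi> y"
proof -
  have "c permutes V" using cyc by (simp add: is_full_cycle_def)
  then have "lex_sorted_by_succ V c \<chi> \<pi>" using A_set_Des_conj_perm_iff[OF pi] assms(5) by simp
  then show ?thesis by (rule lex_sorted_by_succ_nonconstant[OF fin cyc two pi])
qed

lemma A_set_unique:
  assumes fin: "finite V" and cyc: "is_full_cycle c V" and prime: "prime (card V)"
    and pi1: "\<pi>\<^sub>1 \<in> bijs_to V" and "\<chi> \<in> A_set V \<pi>\<^sub>1 (Des (card V) (conj_perm V \<pi>\<^sub>1 c))"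
    and pi2: "\<pi>\<^sub>2 \<in> bijs_to V" and "\<chi> \<in> A_set V \<pi>\<^sub>2 (Des (card V) (conj_perm V \<pi>\<^sub>2 c))"
  shows "\<pi>\<^sub>1 = \<pi>\<^sub>2"
proof -
  have perm: "c permutes V" using cyc by (simp add: is_full_cycle_def)
  have "2 \<le> card V" using prime by (rule prime_ge_2_nat)
  then obtain x y where xy: "x \<in> V" "y \<in> V" "\<chi> x \<noteq> \<chi> y"
    using A_set_nonconstant[OF fin cyc _ pi1 assms(5)] by blast
  have "lex_sorted_by_succ V c \<chi> \<pi>\<^sub>1" and "lex_sorted_by_succ V c \<chi> \<pi>\<^sub>2"
    using A_set_Des_conj_perm_iff[OF pi1 perm] A_set_Des_conj_perm_iff[OF pi2 perm] assms(5,7)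
    by simp_all
  then show ?thesis
    using bijs_to_eq_rank_by_orbit_word[OF fin cyc prime xy pi1]
      bijs_to_eq_rank_by_orbit_word[OF fin cyc prime xy pi2] by simp
qed

theorem theorem2p1:
  fixes V :: "'a set" and c :: "'a \<Rightarrow> 'a" and n :: nat
  assumes "finite V" and "card V = n" and "prime n"
    and "is_full_cycle c V"
  shows "{\<chi> \<in> colorings V. \<exists>x\<in>V. \<exists>y\<in>V. \<chi> x \<noteq> \<chi> y}
           = (\<Union>\<pi>\<in>bijs_to V. A_set V \<pi> (Des n (conj_perm V \<pi> c)))
         \<and> disjoint_family_on (\<lambda>\<pi>. A_set V \<pi> (Des n (conj_perm V \<pi> c))) (bijs_to V)"
proof -
  note fin = assms(1) and cyc = assms(4)
  have prime: "prime (card V)" and two: "2 \<le> card V"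
    using assms(2,3) prime_ge_2_nat by auto
  have "{\<chi> \<in> colorings V. \<exists>x\<in>V. \<exists>y\<in>V. \<chi> x \<noteq> \<chi> y}
          = (\<Union>\<pi>\<in>bijs_to V. A_set V \<pi> (Des (card V) (conj_perm V \<pi> c)))"
  proof (intro equalityI subsetI)
    fix \<chi> assume "\<chi> \<in> {\<chi> \<in> colorings V. \<exists>x\<in>V. \<exists>y\<in>V. \<chi> x \<noteq> \<chi> y}"
    then obtain x y where "\<chi> \<in> colorings V" "x \<in> V" "y \<in> V" "\<chi> x \<noteq> \<chi> y" by blast
    from A_set_rank_by_orbit_word[OF fin cyc prime this]
    show "\<chi> \<in> (\<Union>\<pi>\<in>bijs_to V. A_set V \<pi> (Des (card V) (conj_perm V \<pi> c)))" by blast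
  next
    fix \<chi> assume "\<chi> \<in> (\<Union>\<pi>\<in>bijs_to V. A_set V \<pi> (Des (card V) (conj_perm V \<pi> c)))"
    then obtain \<pi> where \<pi>: "\<pi> \<in> bijs_to V" "\<chi> \<in> A_set V \<pi> (Des (card V) (conj_perm V \<pi> c))" by blast
    then have "\<chi> \<in> colorings V" by (simp add: A_set_def)
    with A_set_nonconstant[OF fin cyc two \<pi>]
    show "\<chi> \<in> {\<chi> \<in> colorings V. \<exists>x\<in>V. \<exists>y\<in>V. \<chi> x \<noteq> \<chi> y}" by blast
  qed
  moreover have "disjoint_family_on (\<lambda>\<pi>. A_set V \<pi> (Des (card V) (conj_perm V \<pi> c))) (bijs_to V)"
    unfolding disjoint_family_on_def using A_set_unique[OF fin cyc prime] by blast
  ultimately show ?thesis using assms(2) by simp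
qed

end
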